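(* The logic $\mathsf{GS4}$ has the finite model property: for every formula $\varphi$, if $\mathsf{GS4}\nvdash\varphi$, then there is a $\mathsf{GS4}$-model $\mathcal M$ with finitely many worlds such that $\mathcal M\not\models\varphi$.
   Context: Fix a countably infinite set $\mathbb P$ of propositional variables. Formulas: $\varphi,\psi ::= p\mid\bot\mid(\varphi\wedge\psi)\mid(\varphi\vee\psi)\mid(\varphi\to\psi)\mid\Diamond\varphi\mid\Box\varphi$; $\neg\varphi:=\varphi\to\bot$. A bi-intuitionistic frame is $(W,W_\bot,\preccurlyeq,\sqsubseteq)$ with $\preccurlyeq,\sqsubseteq$ preorders on $W$ and $W_\bot\subseteq W$ upward closed under both; infallible if $W_\bot=\varnothing$. A valuation $V:\mathbb P\to 2^W$ has each $V(p)$ upward closed under $\preccurlyeq$ and containing $W_\bot$; a model is $\mathcal M=(W,W_\bot,\preccurlyeq,\sqsubseteq,V)$. Satisfaction: $p$ iff $w\in V(p)$; $\bot$ iff $w\in W_\bot$; $\wedge,\vee$ pointwise; $w\models\varphi\to\psi$ iff for all $v\succcurlyeq w$, $v\models\varphi$ implies $v\models\psi$; $w\models\Diamond\varphi$ iff for all $u\succcurlyeq w$ there is $v\sqsupseteq u$ with $v\models\varphi$; $w\models\Box\varphi$ iff $v\models\varphi$ whenever $w\preccurlyeq u\sqsubseteq v$. $\mathcal M\models\varphi$ iff $\varphi$ holds at every $w\in W\setminus W_\bot$. $\sqsubseteq$ is forward confluent if $w\preccurlyeq w'$ and $w\sqsubseteq v$ imply some $v'$ with $v\preccurlyeq v'$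 and $w'\sqsubseteq v'$; backward confluent if $w\sqsubseteq v\preccurlyeq v'$ implies some $w'$ with $w\preccurlyeq w'\sqsubseteq v'$. The frame is locally linear if $w\preccurlyeq u$ and $w\preccurlyeq v$ imply $u\preccurlyeq v$ or $v\preccurlyeq u$. A $\mathsf{GS4}$-frame is an infallible, locally linear bi-intuitionistic frame in which $\sqsubseteq$ is forward and backward confluent; a $\mathsf{GS4}$-model is a model on such a frame. $\mathsf{CS4}$ is the least set of formulas containing all intuitionistic propositional tautologies and all instances of $\Box(\varphi\to\psi)\to(\Box\varphi\to\Box\psi)$, $\Box(\varphi\to\psi)\to(\Diamond\varphi\to\Diamond\psi)$, $\Box\varphi\to\varphi$, $\varphi\to\Diamond\varphi$, $\Box\varphi\to\Box\Box\varphi$, $\Diamond\Diamond\varphi\to\Diamond\varphi$, closed under modus ponens and necessitation. $\mathsf{GS4}$ is $\mathsf{CS4}$ extended with all instances of $(\Diamond\varphi\to\Box\psi)\to\Box(\varphi\to\psi)$, $\Diamond(\varphi\vee\psi)\to\Diamond\varphi\vee\Diamond\psi$, $\neg\Diamond\bot$, and $(\varphi\to\psi)\vee(\psi\to\varphi)$ (closed under the same rules). *)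

theory Defs
  imports Main
begin

datatype fm =
    Var nat
  | Bot
  | And fm fm
  | Or fm fm
  | Imp fm fm
  | Dia fm
  | Box fm

definition Neg :: "fm \<Rightarrow> fm" where
  "Neg \<phi> = Imp \<phi> Bot"

(* Hilbert-style axioms of intuitionistic propositional logic, instantiated with
   arbitrary (modal) formulas; together with modus ponens they generate exactly the
   substitution instances of intuitionistic propositional tautologies. *)
inductive ipc_axiom :: "fm \<Rightarrow> bool" where
  ax_K:    "ipc_axiom (Imp \<phi> (Imp \<psi> \<phi>))"
| ax_S:    "ipc_axiom (Imp (Imp \<phi> (Imp \<psi> \<chi>)) (Imp (Imp \<phi> \<psi>) (Imp \<phi> \<chi>)))"
| ax_AndE1: "ipc_axiom (Imp (And \<phi> \<psi>) \<phi>)"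
| ax_AndE2: "ipc_axiom (Imp (And \<phi> \<psi>) \<psi>)"
| ax_AndI: "ipc_axiom (Imp \<phi> (Imp \<psi> (And \<phi> \<psi>)))"
| ax_OrI1: "ipc_axiom (Imp \<phi> (Or \<phi> \<psi>))"
| ax_OrI2: "ipc_axiom (Imp \<psi> (Or \<phi> \<psi>))"
| ax_OrE:  "ipc_axiom (Imp (Imp \<phi> \<chi>) (Imp (Imp \<psi> \<chi>) (Imp (Or \<phi> \<psi>) \<chi>)))"
| ax_Bot:  "ipc_axiom (Imp Bot \<phi>)"

inductive cs4_axiom :: "fm \<Rightarrow> bool" where
  ax_KBox: "cs4_axiom (Imp (Box (Imp \<phi> \<psi>)) (Imp (Box \<phi>) (Box \<psi>)))"
| ax_KDia: "cs4_axiom (Imp (Box (Imp \<phi> \<psi>)) (Imp (Dia \<phi>) (Dia \<psi>)))"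
| ax_T:    "cs4_axiom (Imp (Box \<phi>) \<phi>)"
| ax_TDia: "cs4_axiom (Imp \<phi> (Dia \<phi>))"
| ax_4:    "cs4_axiom (Imp (Box \<phi>) (Box (Box \<phi>)))"
| ax_4Dia: "cs4_axiom (Imp (Dia (Dia \<phi>)) (Dia \<phi>))"

inductive gs4_extra_axiom :: "fm \<Rightarrow> bool" where
  ax_FS:   "gs4_extra_axiom (Imp (Imp (Dia \<phi>) (Box \<psi>)) (Box (Imp \<phi> \<psi>)))"
| ax_DP:   "gs4_extra_axiom (Imp (Dia (Or \<phi> \<psi>)) (Or (Dia \<phi>) (Dia \<psi>)))"
| ax_N:    "gs4_extra_axiom (Neg (Dia Bot))"
| ax_GD:   "gs4_extra_axiom (Or (Imp \<phi> \<psi>) (Imp \<psi> \<phi>))"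

inductive GS4_derivable :: "fm \<Rightarrow> bool" where
  ipc:  "ipc_axiom \<phi> \<Longrightarrow> GS4_derivable \<phi>"
| cs4:  "cs4_axiom \<phi> \<Longrightarrow> GS4_derivable \<phi>"
| gs4:  "gs4_extra_axiom \<phi> \<Longrightarrow> GS4_derivable \<phi>"
| mp:   "GS4_derivable (Imp \<phi> \<psi>) \<Longrightarrow> GS4_derivable \<phi> \<Longrightarrow> GS4_derivable \<psi>"
| nec:  "GS4_derivable \<phi> \<Longrightarrow> GS4_derivable (Box \<phi>)"

(* Models: W carrier, Wb fallible worlds, Le = \<preccurlyeq>, Sq = \<sqsubseteq>, V valuation *)
definition preorder_on :: "'w set \<Rightarrow> ('w \<times> 'w) set \<Rightarrow> bool" where
  "preorder_on W R \<longleftrightarrow> R \<subseteq> W \<times> W \<and> refl_on W R \<and> trans R"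

definition up_closed :: "('w \<times> 'w) set \<Rightarrow> 'w set \<Rightarrow> bool" where
  "up_closed R A \<longleftrightarrow> (\<forall>w v. w \<in> A \<longrightarrow> (w, v) \<in> R \<longrightarrow> v \<in> A)"

definition biint_frame :: "'w set \<Rightarrow> 'w set \<Rightarrow> ('w \<times> 'w) set \<Rightarrow> ('w \<times> 'w) set \<Rightarrow> bool" where
  "biint_frame W Wb Le Sq \<longleftrightarrow> preorder_on W Le \<and> preorder_on W Sq \<and> Wb \<subseteq> W
     \<and> up_closed Le Wb \<and> up_closed Sq Wb"

definition biint_model :: "'w set \<Rightarrow> 'w set \<Rightarrow> ('w \<times> 'w) set \<Rightarrow> ('w \<times> 'w) set
     \<Rightarrow> (nat \<Rightarrow> 'w set) \<Rightarrow> bool" where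
  "biint_model W Wb Le Sq V \<longleftrightarrow> biint_frame W Wb Le Sq
     \<and> (\<forall>p. V p \<subseteq> W \<and> up_closed Le (V p) \<and> Wb \<subseteq> V p)"

definition forward_confluent :: "('w \<times> 'w) set \<Rightarrow> ('w \<times> 'w) set \<Rightarrow> bool" where
  "forward_confluent Le Sq \<longleftrightarrow>
     (\<forall>w w' v. (w, w') \<in> Le \<longrightarrow> (w, v) \<in> Sq \<longrightarrow> (\<exists>v'. (v, v') \<in> Le \<and> (w', v') \<in> Sq))"

definition backward_confluent :: "('w \<times> 'w) set \<Rightarrow> ('w \<times> 'w) set \<Rightarrow> bool" where
  "backward_confluent Le Sq \<longleftrightarrow>
     (\<forall>w v v'. (w, v) \<in> Sq \<longrightarrow> (v, v') \<in> Le \<longrightarrow> (\<exists>w'. (w, w') \<in> Le \<and> (w', v') \<in> Sq))"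

definition locally_linear :: "('w \<times> 'w) set \<Rightarrow> bool" where
  "locally_linear Le \<longleftrightarrow>
     (\<forall>w u v. (w, u) \<in> Le \<longrightarrow> (w, v) \<in> Le \<longrightarrow> (u, v) \<in> Le \<or> (v, u) \<in> Le)"

definition GS4_model :: "'w set \<Rightarrow> 'w set \<Rightarrow> ('w \<times> 'w) set \<Rightarrow> ('w \<times> 'w) set
     \<Rightarrow> (nat \<Rightarrow> 'w set) \<Rightarrow> bool" where
  "GS4_model W Wb Le Sq V \<longleftrightarrow> biint_model W Wb Le Sq V \<and> Wb = {}
     \<and> locally_linear Le \<and> forward_confluent Le Sq \<and> backward_confluent Le Sq"

fun sat :: "'w set \<Rightarrow> ('w \<times> 'w) set \<Rightarrow> ('w \<times> 'w) set \<Rightarrow> (nat \<Rightarrow> 'w set)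
     \<Rightarrow> 'w \<Rightarrow> fm \<Rightarrow> bool" where
  "sat Wb Le Sq V w (Var p) \<longleftrightarrow> w \<in> V p"
| "sat Wb Le Sq V w Bot \<longleftrightarrow> w \<in> Wb"
| "sat Wb Le Sq V w (And \<phi> \<psi>) \<longleftrightarrow> sat Wb Le Sq V w \<phi> \<and> sat Wb Le Sq V w \<psi>"
| "sat Wb Le Sq V w (Or \<phi> \<psi>) \<longleftrightarrow> sat Wb Le Sq V w \<phi> \<or> sat Wb Le Sq V w \<psi>"
| "sat Wb Le Sq V w (Imp \<phi> \<psi>) \<longleftrightarrow>
     (\<forall>v. (w, v) \<in> Le \<longrightarrow> sat Wb Le Sq V v \<phi> \<longrightarrow> sat Wb Le Sq V v \<psi>)"
| "sat Wb Le Sq V w (Dia \<phi>) \<longleftrightarrow>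
     (\<forall>u. (w, u) \<in> Le \<longrightarrow> (\<exists>v. (u, v) \<in> Sq \<and> sat Wb Le Sq V v \<phi>))"
| "sat Wb Le Sq V w (Box \<phi>) \<longleftrightarrow>
     (\<forall>u v. (w, u) \<in> Le \<longrightarrow> (u, v) \<in> Sq \<longrightarrow> sat Wb Le Sq V v \<phi>)"

definition valid_in :: "'w set \<Rightarrow> 'w set \<Rightarrow> ('w \<times> 'w) set \<Rightarrow> ('w \<times> 'w) set
     \<Rightarrow> (nat \<Rightarrow> 'w set) \<Rightarrow> fm \<Rightarrow> bool" where
  "valid_in W Wb Le Sq V \<phi> \<longleftrightarrow> (\<forall>w \<in> W - Wb. sat Wb Le Sq V w \<phi>)"

end

theory Submission
  imports Defs
begin

text \<open>A non-theorem \<open>\<phi>\<close> fails in the canonical model: its worlds are the prime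
  GS4-theories, \<open>\<preccurlyeq>\<close> is inclusion, and \<open>\<Gamma> \<sqsubseteq> \<Delta>\<close> holds iff \<open>\<Delta>\<close> contains every \<open>\<psi>\<close> with
  \<open>\<box>\<psi> \<in> \<Gamma>\<close> and \<open>\<Gamma>\<close> contains \<open>\<diamond>\<psi>\<close> for every \<open>\<psi> \<in> \<Delta>\<close>. The Goedel-Dummett axiom makes
  the prime theories above a given one a chain, and the axioms FS, DP and N provide the
  existence lemmas needed for the truth lemma and for both confluence properties.
  To obtain a finite model, the canonical model is filtered through the subformulas \<open>S\<close> of
  \<open>\<phi>\<close>: the world of \<open>\<Gamma>\<close> is the set of \<open>S\<close>-types \<open>\<Delta> \<inter> S\<close> of all prime \<open>\<Delta> \<supseteq> \<Gamma>\<close>. Keeping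
  this whole cone rather than the type of \<open>\<Gamma>\<close> alone is what preserves local linearity and
  confluence. The projected canonical \<open>\<sqsubseteq>\<close> need not be transitive, so its transitive closure is
  taken; boxed formulas of \<open>S\<close> still persist forwards and diamond formulas backwards along it
  (axioms 4), which is all the truth lemma needs. Finally the finite model is copied onto an
  initial segment of the natural numbers.\<close>

section \<open>Derivations from hypotheses\<close>

inductive derives :: "fm set \<Rightarrow> fm \<Rightarrow> bool" (infix "\<turnstile>" 50) for G where
  hyp: "a \<in> G \<Longrightarrow> G \<turnstile> a"
| ax: "GS4_derivable a \<Longrightarrow> G \<turnstile> a"
| mp: "G \<turnstile> Imp a b \<Longrightarrow> G \<turnstile> a \<Longrightarrow> G \<turnstile> b"

lemmas derives_ipc = derives.ax[OF GS4_derivable.ipc]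
  and derives_cs4 = derives.ax[OF GS4_derivable.cs4]

lemma GS4_derivable_if_derives_empty: "{} \<turnstile> a \<Longrightarrow> GS4_derivable a"
  by (induction rule: derives.induct) (auto intro: GS4_derivable.mp)

lemma derives_mono: "G \<turnstile> a \<Longrightarrow> G \<subseteq> H \<Longrightarrow> H \<turnstile> a"
  by (induction rule: derives.induct) (auto intro: derives.intros)

lemma derives_any_if_empty: "{} \<turnstile> a \<Longrightarrow> G \<turnstile> a"
  using derives_mono by blast

lemma GS4_derivable_Imp_refl: "GS4_derivable (Imp a a)"
  by (meson GS4_derivable.ipc GS4_derivable.mp ipc_axiom.ax_K ipc_axiom.ax_S)

lemma deduction: "insert a G \<turnstile> b \<Longrightarrow> G \<turnstile> Imp a b"
proof (induction rule: derives.induct)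
  case (hyp b)
  then show ?case
    by (metis GS4_derivable_Imp_refl derives.ax derives.hyp derives.mp derives_ipc
        insert_iff ipc_axiom.ax_K)
next
  case (ax b)
  then show ?case by (meson derives.ax derives.mp derives_ipc ipc_axiom.ax_K)
next
  case (mp b c)
  then show ?case by (meson derives.mp derives_ipc ipc_axiom.ax_S)
qed

lemma derives_Imp_iff: "G \<turnstile> Imp a b \<longleftrightarrow> insert a G \<turnstile> b"
  by (meson deduction derives.hyp derives.mp derives_mono insertI1 subset_insertI)

lemma derives_cut: "G \<turnstile> a \<Longrightarrow> insert a G \<turnstile> b \<Longrightarrow> G \<turnstile> b"
  using deduction derives.mp by blast

lemma derives_Imp_trans: "G \<turnstile> Imp a b \<Longrightarrow> G \<turnstile> Imp b c \<Longrightarrow> G \<turnstile> Imp a c"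
  by (meson derives.mp derives_Imp_iff derives_mono subset_insertI)

lemma derives_AndI: "G \<turnstile> a \<Longrightarrow> G \<turnstile> b \<Longrightarrow> G \<turnstile> And a b"
  by (meson derives.mp derives_ipc ipc_axiom.ax_AndI)

lemma derives_AndE1: "G \<turnstile> And a b \<Longrightarrow> G \<turnstile> a"
  by (meson derives.mp derives_ipc ipc_axiom.ax_AndE1)

lemma derives_AndE2: "G \<turnstile> And a b \<Longrightarrow> G \<turnstile> b"
  by (meson derives.mp derives_ipc ipc_axiom.ax_AndE2)

lemma derives_OrI1: "G \<turnstile> a \<Longrightarrow> G \<turnstile> Or a b"
  by (meson derives.mp derives_ipc ipc_axiom.ax_OrI1)

lemma derives_OrI2: "G \<turnstile> b \<Longrightarrow> G \<turnstile> Or a b"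
  by (meson derives.mp derives_ipc ipc_axiom.ax_OrI2)

lemma derives_OrE:
  "G \<turnstile> Or a b \<Longrightarrow> insert a G \<turnstile> c \<Longrightarrow> insert b G \<turnstile> c \<Longrightarrow> G \<turnstile> c"
  by (meson deduction derives.mp derives_ipc ipc_axiom.ax_OrE)

lemma derives_BotE: "G \<turnstile> Bot \<Longrightarrow> G \<turnstile> a"
  by (meson derives.mp derives_ipc ipc_axiom.ax_Bot)

lemma derives_Box_image: "G \<turnstile> a \<Longrightarrow> Box ` G \<turnstile> Box a"
proof (induction rule: derives.induct)
  case (hyp a) then show ?case by (simp add: derives.hyp)
next
  case (ax a) then show ?case by (simp add: derives.ax GS4_derivable.nec)
next
  case (mp a b) then show ?case by (meson derives.mp derives_cs4 cs4_axiom.ax_KBox)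
qed

lemma derives_Box_mono: "{} \<turnstile> Imp a b \<Longrightarrow> G \<turnstile> Imp (Box a) (Box b)"
  by (meson GS4_derivable_if_derives_empty GS4_derivable.nec derives.ax derives.mp
      derives_cs4 cs4_axiom.ax_KBox)

lemma derives_Dia_mono: "{} \<turnstile> Imp a b \<Longrightarrow> G \<turnstile> Imp (Dia a) (Dia b)"
  by (meson GS4_derivable_if_derives_empty GS4_derivable.nec derives.ax derives.mp
      derives_cs4 cs4_axiom.ax_KDia)

lemma derives_finite_subset: "G \<turnstile> a \<Longrightarrow> \<exists>F \<subseteq> G. finite F \<and> F \<turnstile> a"
proof (induction rule: derives.induct)
  case (hyp a)
  then show ?case by (intro exI[of _ "{a}"]) (auto intro: derives.hyp)
next
  case (ax a)
  then show ?case by (intro exI[of _ "{}"]) (auto intro: derives.ax)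
next
  case (mp a b)
  then obtain F1 F2 where "F1 \<subseteq> G" "finite F1" "F1 \<turnstile> Imp a b" "F2 \<subseteq> G" "finite F2" "F2 \<turnstile> a"
    by blast
  then show ?case
    by (intro exI[of _ "F1 \<union> F2"]) (meson derives.mp derives_mono finite_UnI le_sup_iff sup_ge1 sup_ge2)
qed

lemma derives_Un_split: "A \<union> B \<turnstile> c \<Longrightarrow> \<exists>s. A \<turnstile> s \<and> B \<turnstile> Imp s c"
proof (induction rule: derives.induct)
  case (hyp c)
  then show ?case
    by (metis GS4_derivable_Imp_refl Un_iff derives.ax derives.hyp derives.mp derives_ipc
        ipc_axiom.ax_K)
next
  case (ax c)
  have "A \<turnstile> Imp Bot Bot" by (simp add: GS4_derivable_Imp_refl derives.ax)
  with ax show ?case by (meson derives.ax derives.mp derives_ipc ipc_axiom.ax_K)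
next
  case (mp a b)
  then obtain s1 s2 where s: "A \<turnstile> s1" "B \<turnstile> Imp s1 (Imp a b)" "A \<turnstile> s2" "B \<turnstile> Imp s2 a"
    by blast
  have "insert (And s1 s2) B \<turnstile> b"
    using s(2,4) by (meson derives.hyp derives.mp derives_AndE1 derives_AndE2
        derives_mono insertI1 subset_insertI)
  then show ?case using s(1,3) derives_AndI deduction by blast
qed

section \<open>Prime theories\<close>

definition prime_theory :: "fm set \<Rightarrow> bool" where
  "prime_theory G \<longleftrightarrow> (\<forall>a. G \<turnstile> a \<longrightarrow> a \<in> G) \<and> Bot \<notin> G
     \<and> (\<forall>a b. Or a b \<in> G \<longrightarrow> a \<in> G \<or> b \<in> G)"

lemma prime_theory_derives: "prime_theory G \<Longrightarrow> G \<turnstile> a \<Longrightarrow> a \<in> G"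
  by (simp add: prime_theory_def)

lemma prime_theory_GS4_derivable: "prime_theory G \<Longrightarrow> GS4_derivable a \<Longrightarrow> a \<in> G"
  by (simp add: derives.ax prime_theory_derives)

lemma prime_theory_mp: "prime_theory G \<Longrightarrow> Imp a b \<in> G \<Longrightarrow> a \<in> G \<Longrightarrow> b \<in> G"
  by (meson derives.hyp derives.mp prime_theory_derives)

lemma prime_theory_GS4_mp:
  "prime_theory G \<Longrightarrow> GS4_derivable (Imp a b) \<Longrightarrow> a \<in> G \<Longrightarrow> b \<in> G"
  using prime_theory_GS4_derivable prime_theory_mp by blast

lemma prime_theory_Bot: "prime_theory G \<Longrightarrow> Bot \<notin> G"
  by (simp add: prime_theory_def)

lemma prime_theory_And_iff: "prime_theory G \<Longrightarrow> And a b \<in> G \<longleftrightarrow> a \<in> G \<and> b \<in> G"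
  by (meson derives_AndE1 derives_AndE2 derives_AndI derives.hyp prime_theory_derives)

lemma prime_theory_Or_iff: "prime_theory G \<Longrightarrow> Or a b \<in> G \<longleftrightarrow> a \<in> G \<or> b \<in> G"
  by (meson derives_OrI1 derives_OrI2 derives.hyp prime_theory_derives prime_theory_def)

lemma chain_Union_underivable:
  assumes "C \<noteq> {}" "subset.chain A C" "\<forall>D\<in>A. \<not> D \<turnstile> t"
  shows "\<not> \<Union>C \<turnstile> t"
proof
  assume "\<Union>C \<turnstile> t"
  then obtain F where F: "F \<subseteq> \<Union>C" "finite F" "F \<turnstile> t"
    using derives_finite_subset by blast
  obtain D where "D \<in> C" "F \<subseteq> D"
    using finite_subset_Union_chain[OF F(2,1) assms(1,2)] .
  then have "D \<in> A" "D \<turnstile> t"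
    using assms(2) F(3) derives_mono unfolding subset_chain_def by blast+
  then show False using assms(3) by blast
qed

lemma lindenbaum:
  assumes "Th \<noteq> {}"
    and Or_closed: "\<And>t1 t2. t1 \<in> Th \<Longrightarrow> t2 \<in> Th \<Longrightarrow> \<exists>t\<in>Th. {} \<turnstile> Imp (Or t1 t2) t"
    and G: "\<forall>t\<in>Th. \<not> G \<turnstile> t"
  shows "\<exists>D. prime_theory D \<and> G \<subseteq> D \<and> D \<inter> Th = {}"
proof -
  define A where "A = {D. G \<subseteq> D \<and> (\<forall>t\<in>Th. \<not> D \<turnstile> t)}"
  have "\<Union>C \<in> A" if C: "C \<noteq> {}" "subset.chain A C" for C
  proof -
    have CA: "C \<subseteq> A" using C(2) unfolding subset_chain_def by blast
    have "\<not> \<Union>C \<turnstile> t" if "t \<in> Th" for t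
      using chain_Union_underivable[OF C] that unfolding A_def by blast
    moreover obtain D where "D \<in> C" using C(1) by blast
    then have "G \<subseteq> \<Union>C" using CA unfolding A_def by blast
    ultimately show ?thesis unfolding A_def by blast
  qed
  moreover have "G \<in> A" using G unfolding A_def by blast
  ultimately obtain M where "M \<in> A" and maximal: "\<And>X. X \<in> A \<Longrightarrow> M \<subseteq> X \<Longrightarrow> X = M"
    using subset_Zorn_nonempty[of A] by blast
  then have GM: "G \<subseteq> M" and M: "\<And>t. t \<in> Th \<Longrightarrow> \<not> M \<turnstile> t"
    unfolding A_def by auto
  have extend: "\<exists>t\<in>Th. insert a M \<turnstile> t" if "a \<notin> M" for a
  proof (rule ccontr)
    assume "\<not> ?thesis"
    then have "insert a M \<in> A" using GM unfolding A_def by blast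
    then show False using maximal that by blast
  qed
  have "a \<in> M" if "M \<turnstile> a" for a
    using extend M derives_cut[OF that] by blast
  moreover have "Bot \<notin> M"
  proof
    assume "Bot \<in> M"
    obtain t where "t \<in> Th" using \<open>Th \<noteq> {}\<close> by blast
    moreover have "M \<turnstile> t" using derives_BotE[OF derives.hyp[OF \<open>Bot \<in> M\<close>]] .
    ultimately show False using M by blast
  qed
  moreover have "a \<in> M \<or> b \<in> M" if "Or a b \<in> M" for a b
  proof (rule ccontr)
    assume "\<not> ?thesis"
    then obtain t1 t2 where t: "t1 \<in> Th" "insert a M \<turnstile> t1" "t2 \<in> Th" "insert b M \<turnstile> t2"
      using extend by blast
    then obtain t where "t \<in> Th" "{} \<turnstile> Imp (Or t1 t2) t"
      using Or_closed by blast
    moreover have "M \<turnstile> Or t1 t2"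
      using derives_OrE[OF derives.hyp[OF that] derives_OrI1[OF t(2)] derives_OrI2[OF t(4)]] .
    ultimately have "M \<turnstile> t" using derives.mp derives_any_if_empty by blast
    then show False using M \<open>t \<in> Th\<close> by blast
  qed
  moreover have "M \<inter> Th = {}"
    using M derives.hyp by blast
  ultimately show ?thesis
    using GM unfolding prime_theory_def by blast
qed

lemma lindenbaum_single: "\<not> G \<turnstile> a \<Longrightarrow> \<exists>D. prime_theory D \<and> G \<subseteq> D \<and> a \<notin> D"
proof -
  assume "\<not> G \<turnstile> a"
  moreover have "{} \<turnstile> Imp (Or a a) a"
    by (meson deduction derives.hyp derives_OrE insertI1)
  ultimately show ?thesis
    using lindenbaum[of "{a}" G] by blast
qed

lemma prime_theories_linear:
  assumes "prime_theory G" "prime_theory D1" "prime_theory D2" "G \<subseteq> D1" "G \<subseteq> D2"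
  shows "D1 \<subseteq> D2 \<or> D2 \<subseteq> D1"
proof (rule ccontr)
  assume "\<not> ?thesis"
  then obtain a b where ab: "a \<in> D1" "a \<notin> D2" "b \<in> D2" "b \<notin> D1" by blast
  have "Or (Imp a b) (Imp b a) \<in> G"
    using assms(1) prime_theory_GS4_derivable GS4_derivable.gs4 gs4_extra_axiom.ax_GD by blast
  then have "Imp a b \<in> G \<or> Imp b a \<in> G" using assms(1) prime_theory_Or_iff by blast
  then show False
  proof
    assume "Imp a b \<in> G"
    then show False using prime_theory_mp[OF assms(2)] assms(4) ab by blast
  next
    assume "Imp b a \<in> G"
    then show False using prime_theory_mp[OF assms(3)] assms(5) ab by blast
  qed
qed

lemma derives_Dia_image:
  assumes D: "prime_theory D" and "Dia ` D \<turnstile> s"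
  shows "\<exists>d\<in>D. {} \<turnstile> Imp (Dia d) s"
  using \<open>Dia ` D \<turnstile> s\<close>
proof (induction rule: derives.induct)
  case (hyp a)
  then show ?case using GS4_derivable_Imp_refl derives.ax by blast
next
  case (ax a)
  have "Imp Bot Bot \<in> D" using D prime_theory_GS4_derivable GS4_derivable_Imp_refl by blast
  moreover have "{} \<turnstile> Imp (Dia (Imp Bot Bot)) a"
    using ax by (meson derives.ax derives.mp derives_ipc ipc_axiom.ax_K)
  ultimately show ?case by blast
next
  case (mp a b)
  then obtain d1 d2 where d: "d1 \<in> D" "{} \<turnstile> Imp (Dia d1) (Imp a b)"
    "d2 \<in> D" "{} \<turnstile> Imp (Dia d2) a"
    by blast
  have "And d1 d2 \<in> D" using D d prime_theory_And_iff by blast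
  moreover have "{Dia (And d1 d2)} \<turnstile> Dia d1" "{Dia (And d1 d2)} \<turnstile> Dia d2"
    using derives_Dia_mono[OF derives_ipc[OF ipc_axiom.ax_AndE1]]
      derives_Dia_mono[OF derives_ipc[OF ipc_axiom.ax_AndE2]]
    by (simp_all add: derives_Imp_iff)
  then have "{Dia (And d1 d2)} \<turnstile> b"
    using derives.mp derives_any_if_empty d(2,4) by meson
  ultimately show ?case using deduction by blast
qed

section \<open>The canonical modal relation\<close>

definition canon_sq :: "fm set \<Rightarrow> fm set \<Rightarrow> bool" where
  "canon_sq G D \<longleftrightarrow> {a. Box a \<in> G} \<subseteq> D \<and> Dia ` D \<subseteq> G"

lemma canon_sq_refl: "prime_theory G \<Longrightarrow> canon_sq G G"
  unfolding canon_sq_def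
  by (auto intro: prime_theory_GS4_mp GS4_derivable.cs4 cs4_axiom.ax_T cs4_axiom.ax_TDia)

lemma canon_sq_Box: "prime_theory G \<Longrightarrow> canon_sq G D \<Longrightarrow> Box a \<in> G \<Longrightarrow> Box a \<in> D"
  using prime_theory_GS4_mp[OF _ GS4_derivable.cs4[OF cs4_axiom.ax_4]]
  unfolding canon_sq_def by blast

lemma canon_sq_Dia: "prime_theory G \<Longrightarrow> canon_sq G D \<Longrightarrow> Dia a \<in> D \<Longrightarrow> Dia a \<in> G"
  using prime_theory_GS4_mp[OF _ GS4_derivable.cs4[OF cs4_axiom.ax_4Dia]]
  unfolding canon_sq_def by blast

lemma Box_in_if_derives_unbox:
  assumes "prime_theory G" "{a. Box a \<in> G} \<turnstile> a"
  shows "Box a \<in> G"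
proof -
  have "Box ` {a. Box a \<in> G} \<subseteq> G" by blast
  then show ?thesis
    using prime_theory_derives[OF assms(1)] derives_mono[OF derives_Box_image[OF assms(2)]]
    by blast
qed

lemma canon_sq_succ_exists:
  assumes G: "prime_theory G" and S: "\<And>s. S \<turnstile> s \<Longrightarrow> Dia s \<in> G"
  shows "\<exists>D. prime_theory D \<and> S \<subseteq> D \<and> canon_sq G D"
proof -
  let ?Th = "{b. Dia b \<notin> G}"
  have "Bot \<in> ?Th"
    using prime_theory_GS4_mp[OF G GS4_derivable.gs4[OF gs4_extra_axiom.ax_N[unfolded Neg_def]]]
      prime_theory_Bot[OF G] by blast
  moreover have "Or t1 t2 \<in> ?Th" if "t1 \<in> ?Th" "t2 \<in> ?Th" for t1 t2
    using prime_theory_GS4_mp[OF G GS4_derivable.gs4[OF gs4_extra_axiom.ax_DP]]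
      prime_theory_Or_iff[OF G] that by blast
  moreover have "\<not> S \<union> {a. Box a \<in> G} \<turnstile> b" if "b \<in> ?Th" for b
  proof
    assume "S \<union> {a. Box a \<in> G} \<turnstile> b"
    then obtain s where s: "S \<turnstile> s" "{a. Box a \<in> G} \<turnstile> Imp s b"
      using derives_Un_split by blast
    have "Box (Imp s b) \<in> G" using Box_in_if_derives_unbox[OF G s(2)] .
    moreover have "Imp (Box (Imp s b)) (Imp (Dia s) (Dia b)) \<in> G"
      using G prime_theory_GS4_derivable GS4_derivable.cs4 cs4_axiom.ax_KDia by blast
    ultimately have "Dia b \<in> G" using G S[OF s(1)] prime_theory_mp by blast
    then show False using that by blast
  qed
  ultimately obtain D where "prime_theory D" "S \<union> {a. Box a \<in> G} \<subseteq> D" "D \<inter> ?Th = {}"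
    using lindenbaum[of ?Th "S \<union> {a. Box a \<in> G}"] GS4_derivable_Imp_refl derives.ax by blast
  then show ?thesis unfolding canon_sq_def by blast
qed

lemma canon_sq_pred_exists:
  assumes G: "prime_theory G" and D: "prime_theory D" and unbox: "{a. Box a \<in> G} \<subseteq> D"
  shows "\<exists>G'. prime_theory G' \<and> G \<subseteq> G' \<and> canon_sq G' D"
proof -
  let ?Th = "Box ` (- D)"
  have "Box Bot \<in> ?Th" using D prime_theory_Bot by blast
  moreover have "\<exists>t\<in>?Th. {} \<turnstile> Imp (Or t1 t2) t" if t: "t1 \<in> ?Th" "t2 \<in> ?Th" for t1 t2
  proof -
    obtain b1 b2 where b: "t1 = Box b1" "t2 = Box b2" "b1 \<notin> D" "b2 \<notin> D" using t by blast
    have "{Or (Box b1) (Box b2)} \<turnstile> Box (Or b1 b2)"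
      using derives_Box_mono[OF derives_ipc[OF ipc_axiom.ax_OrI1]]
        derives_Box_mono[OF derives_ipc[OF ipc_axiom.ax_OrI2]]
      by (meson derives.hyp derives_OrE derives_Imp_iff singletonI)
    moreover have "Or b1 b2 \<notin> D" using b D prime_theory_Or_iff by blast
    ultimately show ?thesis using b deduction by blast
  qed
  moreover have "\<not> G \<union> Dia ` D \<turnstile> Box c" if "c \<notin> D" for c
  proof
    assume "G \<union> Dia ` D \<turnstile> Box c"
    then obtain s where s: "Dia ` D \<turnstile> s" "G \<turnstile> Imp s (Box c)"
      using derives_Un_split[of "Dia ` D" G] by (auto simp: Un_commute)
    obtain d where d: "d \<in> D" "{} \<turnstile> Imp (Dia d) s"
      using derives_Dia_image[OF D s(1)] by blast
    have "Imp (Dia d) (Box c) \<in> G"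
      using G derives_Imp_trans[OF derives_any_if_empty[OF d(2)] s(2)] prime_theory_derives by blast
    moreover have "Imp (Imp (Dia d) (Box c)) (Box (Imp d c)) \<in> G"
      using G prime_theory_GS4_derivable GS4_derivable.gs4 gs4_extra_axiom.ax_FS by blast
    ultimately have "Box (Imp d c) \<in> G" using G prime_theory_mp by blast
    then have "c \<in> D" using unbox D d(1) prime_theory_mp by blast
    then show False using that by blast
  qed
  ultimately obtain G' where "prime_theory G'" "G \<union> Dia ` D \<subseteq> G'" "G' \<inter> ?Th = {}"
    using lindenbaum[of ?Th "G \<union> Dia ` D"] by blast
  then show ?thesis unfolding canon_sq_def by blast
qed

lemma canon_sq_Box_witness:
  assumes "prime_theory G" "Box a \<notin> G"
  shows "\<exists>G' D. prime_theory G' \<and> prime_theory D \<and> G \<subseteq> G' \<and> canon_sq G' D \<and> a \<notin> D"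
proof -
  obtain D where "prime_theory D" "{a. Box a \<in> G} \<subseteq> D" "a \<notin> D"
    using lindenbaum_single Box_in_if_derives_unbox assms by blast
  then show ?thesis using canon_sq_pred_exists assms(1) by blast
qed

lemma canon_sq_Dia_witness:
  assumes G: "prime_theory G" and "Dia a \<in> G"
  shows "\<exists>D. prime_theory D \<and> canon_sq G D \<and> a \<in> D"
proof -
  have "Dia s \<in> G" if "{a} \<turnstile> s" for s
    using prime_theory_derives[OF G derives_Dia_mono[OF deduction[OF that]]]
      prime_theory_mp[OF G] \<open>Dia a \<in> G\<close> by blast
  then show ?thesis using canon_sq_succ_exists[OF G] by blast
qed

lemma canon_sq_forward:
  assumes "prime_theory G'" "G \<subseteq> G'" "prime_theory D" "canon_sq G D"
  shows "\<exists>D'. prime_theory D' \<and> D \<subseteq> D' \<and> canon_sq G' D'"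
proof -
  have "Dia s \<in> G'" if "D \<turnstile> s" for s
  proof -
    have "s \<in> D" using prime_theory_derives[OF assms(3) that] .
    then show ?thesis using assms(2,4) unfolding canon_sq_def by blast
  qed
  then show ?thesis using canon_sq_succ_exists[OF assms(1)] by blast
qed

lemma canon_sq_backward:
  assumes "prime_theory G" "canon_sq G D" "prime_theory D'" "D \<subseteq> D'"
  shows "\<exists>G'. prime_theory G' \<and> G \<subseteq> G' \<and> canon_sq G' D'"
proof -
  have "{a. Box a \<in> G} \<subseteq> D'" using assms(2,4) unfolding canon_sq_def by blast
  then show ?thesis using canon_sq_pred_exists[OF assms(1,3)] by blast
qed

section \<open>The filtered canonical model\<close>

lemma forward_confluent_trancl:
  assumes "forward_confluent Le Sq"
  shows "forward_confluent Le (Sq\<^sup>+)"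
  unfolding forward_confluent_def
proof (intro allI impI)
  fix w w' v
  assume "(w, v) \<in> Sq\<^sup>+" and "(w, w') \<in> Le"
  then show "\<exists>v'. (v, v') \<in> Le \<and> (w', v') \<in> Sq\<^sup>+"
  proof (induction rule: trancl_induct)
    case (base v)
    then show ?case using assms unfolding forward_confluent_def by blast
  next
    case (step y z)
    then obtain y' where "(y, y') \<in> Le" "(w', y') \<in> Sq\<^sup>+" by blast
    moreover obtain z' where "(z, z') \<in> Le" "(y', z') \<in> Sq"
      using assms \<open>(y, z) \<in> Sq\<close> calculation(1) unfolding forward_confluent_def by blast
    ultimately show ?case by (meson trancl.trancl_into_trancl)
  qed
qed

lemma backward_confluent_trancl:
  assumes "backward_confluent Le Sq"
  shows "backward_confluent Le (Sq\<^sup>+)"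
  unfolding backward_confluent_def
proof (intro allI impI)
  fix w v v'
  assume "(w, v) \<in> Sq\<^sup>+" and "(v, v') \<in> Le"
  then show "\<exists>w'. (w, w') \<in> Le \<and> (w', v') \<in> Sq\<^sup>+"
  proof (induction rule: converse_trancl_induct)
    case (base w)
    then show ?case using assms unfolding backward_confluent_def by blast
  next
    case (step w y)
    then obtain y' where "(y, y') \<in> Le" "(y', v') \<in> Sq\<^sup>+" by blast
    moreover obtain w' where "(w, w') \<in> Le" "(w', y') \<in> Sq"
      using assms \<open>(w, y) \<in> Sq\<close> calculation(1) unfolding backward_confluent_def by blast
    ultimately show ?case by (meson trancl_into_trancl2)
  qed
qed

fun subfms :: "fm \<Rightarrow> fm set" where
  "subfms (Var p) = {Var p}"
| "subfms Bot = {Bot}"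
| "subfms (And a b) = insert (And a b) (subfms a \<union> subfms b)"
| "subfms (Or a b) = insert (Or a b) (subfms a \<union> subfms b)"
| "subfms (Imp a b) = insert (Imp a b) (subfms a \<union> subfms b)"
| "subfms (Dia a) = insert (Dia a) (subfms a)"
| "subfms (Box a) = insert (Box a) (subfms a)"

lemma finite_subfms: "finite (subfms a)"
  by (induction a) auto

definition cone :: "fm set \<Rightarrow> fm set \<Rightarrow> fm set set" where
  "cone S G = {D \<inter> S | D. prime_theory D \<and> G \<subseteq> D}"

definition filt_worlds :: "fm set \<Rightarrow> fm set set set" where
  "filt_worlds S = {cone S G | G. prime_theory G}"

definition filt_le :: "fm set \<Rightarrow> (fm set set \<times> fm set set) set" where
  "filt_le S = {(cone S G, cone S G') | G G'. prime_theory G \<and> prime_theory G' \<and> G \<subseteq> G'}"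

definition filt_sq_step :: "fm set \<Rightarrow> (fm set set \<times> fm set set) set" where
  "filt_sq_step S = {(cone S G, cone S D) | G D. prime_theory G \<and> prime_theory D \<and> canon_sq G D}"

definition filt_sq :: "fm set \<Rightarrow> (fm set set \<times> fm set set) set" where
  "filt_sq S = (filt_sq_step S)\<^sup>+"

definition filt_val :: "fm set \<Rightarrow> nat \<Rightarrow> fm set set set" where
  "filt_val S p = {w \<in> filt_worlds S. Var p \<in> \<Inter>w}"

lemma finite_filt_worlds: "finite S \<Longrightarrow> finite (filt_worlds S)"
proof -
  assume "finite S"
  have "filt_worlds S \<subseteq> Pow (Pow S)" unfolding filt_worlds_def cone_def by blast
  then show ?thesis using \<open>finite S\<close> by (meson finite_Pow_iff finite_subset)
qed

lemma Int_mem_cone: "prime_theory G \<Longrightarrow> G \<inter> S \<in> cone S G"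
  unfolding cone_def by blast

lemma Inter_cone: "prime_theory G \<Longrightarrow> \<Inter>(cone S G) = G \<inter> S"
  unfolding cone_def by blast

lemma cone_mem_filt_worlds: "prime_theory G \<Longrightarrow> cone S G \<in> filt_worlds S"
  unfolding filt_worlds_def by blast

lemma filt_le_cone:
  "prime_theory G \<Longrightarrow> prime_theory G' \<Longrightarrow> G \<subseteq> G' \<Longrightarrow> (cone S G, cone S G') \<in> filt_le S"
  unfolding filt_le_def by blast

lemma cone_above:
  assumes "prime_theory G" "prime_theory G'" "G \<subseteq> G'"
  shows "cone S G' = {s \<in> cone S G. G' \<inter> S \<subseteq> s}"
proof
  show "cone S G' \<subseteq> {s \<in> cone S G. G' \<inter> S \<subseteq> s}"
    using assms(3) unfolding cone_def by blast
next
  show "{s \<in> cone S G. G' \<inter> S \<subseteq> s} \<subseteq> cone S G'"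
  proof
    fix s assume s: "s \<in> {s \<in> cone S G. G' \<inter> S \<subseteq> s}"
    then obtain D where D: "s = D \<inter> S" "prime_theory D" "G \<subseteq> D" unfolding cone_def by blast
    from prime_theories_linear[OF assms(1) D(2) assms(2) D(3) assms(3)]
    show "s \<in> cone S G'"
    proof
      assume "D \<subseteq> G'"
      then have "s = G' \<inter> S" using s D(1) by blast
      then show ?thesis using Int_mem_cone assms(2) by blast
    next
      assume "G' \<subseteq> D"
      then show ?thesis using D unfolding cone_def by blast
    qed
  qed
qed

lemma filt_le_witness:
  assumes G: "prime_theory G" and "(cone S G, u) \<in> filt_le S"
  shows "\<exists>G'. prime_theory G' \<and> G \<subseteq> G' \<and> u = cone S G'"
proof -
  obtain G0 G1 where G0: "prime_theory G0" "cone S G = cone S G0"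
    and G1: "prime_theory G1" "G0 \<subseteq> G1" "u = cone S G1"
    using assms(2) unfolding filt_le_def by auto
  have "G1 \<inter> S \<in> cone S G"
    using Int_mem_cone[OF G1(1)] cone_above[OF G0(1) G1(1,2)] G0(2) by blast
  then obtain G2 where G2: "prime_theory G2" "G \<subseteq> G2" "G1 \<inter> S = G2 \<inter> S"
    unfolding cone_def by blast
  have "cone S G2 = cone S G1"
    using cone_above[OF G G2(1,2)] cone_above[OF G0(1) G1(1,2)] G0(2) G2(3) by simp
  then show ?thesis using G1(3) G2(1,2) by blast
qed

lemma filt_le_preorder: "preorder_on (filt_worlds S) (filt_le S)"
  unfolding preorder_on_def
proof (intro conjI)
  show "filt_le S \<subseteq> filt_worlds S \<times> filt_worlds S"
    unfolding filt_le_def filt_worlds_def by blast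
  then show "refl_on (filt_worlds S) (filt_le S)"
    unfolding refl_on_def filt_le_def filt_worlds_def by blast
  show "trans (filt_le S)"
  proof (rule transI)
    fix x y z assume "(x, y) \<in> filt_le S" "(y, z) \<in> filt_le S"
    then obtain G G' where "prime_theory G" "prime_theory G'" "G \<subseteq> G'"
      "x = cone S G" "y = cone S G'"
      unfolding filt_le_def by blast
    moreover obtain G'' where "prime_theory G''" "G' \<subseteq> G''" "z = cone S G''"
      using filt_le_witness \<open>(y, z) \<in> filt_le S\<close> calculation by blast
    ultimately show "(x, z) \<in> filt_le S" unfolding filt_le_def by blast
  qed
qed

lemma filt_le_locally_linear: "locally_linear (filt_le S)"
  unfolding locally_linear_def
proof (intro allI impI)
  fix w u v assume wu: "(w, u) \<in> filt_le S" and wv: "(w, v) \<in> filt_le S"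
  then obtain G where G: "prime_theory G" "w = cone S G" unfolding filt_le_def by blast
  obtain G1 G2 where "prime_theory G1" "G \<subseteq> G1" "u = cone S G1"
    "prime_theory G2" "G \<subseteq> G2" "v = cone S G2"
    using filt_le_witness G wu wv by metis
  with prime_theories_linear[OF G(1)] show "(u, v) \<in> filt_le S \<or> (v, u) \<in> filt_le S"
    unfolding filt_le_def by blast
qed

lemma filt_sq_step_forward_confluent: "forward_confluent (filt_le S) (filt_sq_step S)"
  unfolding forward_confluent_def
proof (intro allI impI)
  fix w w' v assume "(w, w') \<in> filt_le S" "(w, v) \<in> filt_sq_step S"
  then obtain G D where GD: "prime_theory G" "prime_theory D" "canon_sq G D"
    "w = cone S G" "v = cone S D"
    unfolding filt_sq_step_def by blast
  then obtain G' where G': "prime_theory G'" "G \<subseteq> G'" "w' = cone S G'"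
    using filt_le_witness \<open>(w, w') \<in> filt_le S\<close> by blast
  then obtain D' where "prime_theory D'" "D \<subseteq> D'" "canon_sq G' D'"
    using canon_sq_forward GD by blast
  then show "\<exists>v'. (v, v') \<in> filt_le S \<and> (w', v') \<in> filt_sq_step S"
    using GD G' unfolding filt_le_def filt_sq_step_def by blast
qed

lemma filt_sq_step_backward_confluent: "backward_confluent (filt_le S) (filt_sq_step S)"
  unfolding backward_confluent_def
proof (intro allI impI)
  fix w v v' assume "(w, v) \<in> filt_sq_step S" "(v, v') \<in> filt_le S"
  then obtain G D where GD: "prime_theory G" "prime_theory D" "canon_sq G D"
    "w = cone S G" "v = cone S D"
    unfolding filt_sq_step_def by blast
  then obtain D' where D': "prime_theory D'" "D \<subseteq> D'" "v' = cone S D'"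
    using filt_le_witness \<open>(v, v') \<in> filt_le S\<close> by blast
  then obtain G' where "prime_theory G'" "G \<subseteq> G'" "canon_sq G' D'"
    using canon_sq_backward GD by blast
  then show "\<exists>w'. (w, w') \<in> filt_le S \<and> (w', v') \<in> filt_sq_step S"
    using GD D' unfolding filt_le_def filt_sq_step_def by blast
qed

lemma filt_sq_preorder: "preorder_on (filt_worlds S) (filt_sq S)"
proof -
  have step: "filt_sq_step S \<subseteq> filt_worlds S \<times> filt_worlds S"
    unfolding filt_sq_step_def filt_worlds_def by blast
  have "refl_on (filt_worlds S) (filt_sq_step S)"
    using step canon_sq_refl unfolding refl_on_def filt_sq_step_def filt_worlds_def by blast
  then show ?thesis
    using trancl_subset_Sigma[OF step] unfolding preorder_on_def filt_sq_def refl_on_def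
    by auto
qed

lemma filt_sq_cone:
  "prime_theory G \<Longrightarrow> prime_theory D \<Longrightarrow> canon_sq G D \<Longrightarrow> (cone S G, cone S D) \<in> filt_sq S"
  unfolding filt_sq_def filt_sq_step_def by blast

lemma filt_sq_cone_witness:
  assumes "(w, v) \<in> filt_sq S"
  obtains D where "prime_theory D" "v = cone S D"
  using assms filt_sq_preorder unfolding preorder_on_def filt_worlds_def by blast

lemma filt_sq_modal:
  assumes "(w, v) \<in> filt_sq S"
  shows "Box a \<in> \<Inter>w \<Longrightarrow> Box a \<in> \<Inter>v" and "Dia a \<in> \<Inter>v \<Longrightarrow> Dia a \<in> \<Inter>w"
proof -
  let ?R = "{(w, v). (\<forall>a. Box a \<in> \<Inter>w \<longrightarrow> Box a \<in> \<Inter>v) \<and> (\<forall>a. Dia a \<in> \<Inter>v \<longrightarrow> Dia a \<in> \<Inter>w)}"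
  have "filt_sq_step S \<subseteq> ?R"
  proof
    fix x assume "x \<in> filt_sq_step S"
    then obtain G D where GD: "prime_theory G" "prime_theory D" "canon_sq G D"
      and x: "x = (cone S G, cone S D)"
      unfolding filt_sq_step_def by blast
    have "\<Inter>(fst x) = G \<inter> S" "\<Inter>(snd x) = D \<inter> S"
      using Inter_cone GD(1,2) x by simp_all
    then show "x \<in> ?R"
      unfolding mem_Collect_eq case_prod_beta
      using canon_sq_Box[OF GD(1,3)] canon_sq_Dia[OF GD(1,3)] by simp
  qed
  moreover have "trans ?R" unfolding trans_def by blast
  ultimately have "(w, v) \<in> ?R"
    using assms trancl_mono[of "(w, v)" "filt_sq_step S" ?R] unfolding filt_sq_def by simp
  then show "Box a \<in> \<Inter>w \<Longrightarrow> Box a \<in> \<Inter>v" and "Dia a \<in> \<Inter>v \<Longrightarrow> Dia a \<in> \<Inter>w" by auto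
qed

lemma filt_val_up_closed: "up_closed (filt_le S) (filt_val S p)"
  unfolding up_closed_def
proof (intro allI impI)
  fix w v assume w: "w \<in> filt_val S p" and "(w, v) \<in> filt_le S"
  then obtain G G' where G: "prime_theory G" "prime_theory G'" "G \<subseteq> G'"
    and wv: "w = cone S G" "v = cone S G'"
    unfolding filt_le_def by blast
  have "Var p \<in> \<Inter>w" using w unfolding filt_val_def by blast
  then have "Var p \<in> G \<inter> S" unfolding wv Inter_cone[OF G(1)] .
  then have "Var p \<in> \<Inter>v" using G(3) unfolding wv Inter_cone[OF G(2)] by blast
  moreover have "v \<in> filt_worlds S" using G(2) unfolding wv filt_worlds_def by blast
  ultimately show "v \<in> filt_val S p" unfolding filt_val_def by blast
qed

lemma GS4_model_filt: "GS4_model (filt_worlds S) {} (filt_le S) (filt_sq S) (filt_val S)"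
proof -
  have "biint_frame (filt_worlds S) {} (filt_le S) (filt_sq S)"
    using filt_le_preorder filt_sq_preorder unfolding biint_frame_def up_closed_def by blast
  moreover have "filt_val S p \<subseteq> filt_worlds S" for p
    unfolding filt_val_def by blast
  ultimately have "biint_model (filt_worlds S) {} (filt_le S) (filt_sq S) (filt_val S)"
    unfolding biint_model_def using filt_val_up_closed by blast
  then show ?thesis
    unfolding GS4_model_def filt_sq_def
    using filt_le_locally_linear forward_confluent_trancl[OF filt_sq_step_forward_confluent]
      backward_confluent_trancl[OF filt_sq_step_backward_confluent]
    by blast
qed

abbreviation filt_sat :: "fm set \<Rightarrow> fm set set \<Rightarrow> fm \<Rightarrow> bool" where
  "filt_sat S \<equiv> sat {} (filt_le S) (filt_sq S) (filt_val S)"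

lemma filt_sat_Var:
  assumes "prime_theory G" "Var p \<in> S"
  shows "filt_sat S (cone S G) (Var p) \<longleftrightarrow> Var p \<in> G"
proof -
  have "filt_sat S (cone S G) (Var p) \<longleftrightarrow> Var p \<in> \<Inter>(cone S G)"
    using cone_mem_filt_worlds[OF assms(1)] unfolding filt_val_def by simp
  then show ?thesis unfolding Inter_cone[OF assms(1)] using assms(2) by blast
qed

lemma filt_sat_Imp:
  assumes G: "prime_theory G"
    and IH_a: "\<And>H. prime_theory H \<Longrightarrow> filt_sat S (cone S H) a \<longleftrightarrow> a \<in> H"
    and IH_b: "\<And>H. prime_theory H \<Longrightarrow> filt_sat S (cone S H) b \<longleftrightarrow> b \<in> H"
  shows "filt_sat S (cone S G) (Imp a b) \<longleftrightarrow> Imp a b \<in> G"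
proof
  assume sat: "filt_sat S (cone S G) (Imp a b)"
  show "Imp a b \<in> G"
  proof (rule ccontr)
    assume "Imp a b \<notin> G"
    then have "\<not> insert a G \<turnstile> b" using deduction prime_theory_derives G by blast
    then obtain D where D: "prime_theory D" "insert a G \<subseteq> D" "b \<notin> D"
      using lindenbaum_single by blast
    then have "filt_sat S (cone S D) b"
      using sat filt_le_cone[OF G D(1)] IH_a[OF D(1)] by auto
    then show False using IH_b[OF D(1)] D(3) by blast
  qed
next
  assume "Imp a b \<in> G"
  show "filt_sat S (cone S G) (Imp a b)"
    unfolding sat.simps
  proof (intro allI impI)
    fix v assume "(cone S G, v) \<in> filt_le S" "filt_sat S v a"
    moreover obtain G' where "prime_theory G'" "G \<subseteq> G'" "v = cone S G'"
      using filt_le_witness[OF G] calculation(1) by blast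
    ultimately show "filt_sat S v b"
      using \<open>Imp a b \<in> G\<close> IH_a IH_b prime_theory_mp by blast
  qed
qed

lemma filt_sat_Box:
  assumes G: "prime_theory G" and "Box a \<in> S"
    and IH: "\<And>H. prime_theory H \<Longrightarrow> filt_sat S (cone S H) a \<longleftrightarrow> a \<in> H"
  shows "filt_sat S (cone S G) (Box a) \<longleftrightarrow> Box a \<in> G"
proof
  assume sat: "filt_sat S (cone S G) (Box a)"
  show "Box a \<in> G"
  proof (rule ccontr)
    assume "Box a \<notin> G"
    then obtain G' D where GD: "prime_theory G'" "prime_theory D" "G \<subseteq> G'" "canon_sq G' D"
      and "a \<notin> D"
      using canon_sq_Box_witness[OF G] by blast
    have "filt_sat S (cone S D) a"
      using sat[unfolded sat.simps, rule_format, OF filt_le_cone[OF G GD(1,3)] filt_sq_cone[OF GD(1,2,4)]] .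
    then show False using IH[OF GD(2)] \<open>a \<notin> D\<close> by blast
  qed
next
  assume "Box a \<in> G"
  show "filt_sat S (cone S G) (Box a)"
    unfolding sat.simps
  proof (intro allI impI)
    fix u v assume "(cone S G, u) \<in> filt_le S" and uv: "(u, v) \<in> filt_sq S"
    then obtain G' where G': "prime_theory G'" "G \<subseteq> G'" "u = cone S G'"
      using filt_le_witness[OF G] by blast
    obtain D where D: "prime_theory D" "v = cone S D"
      using filt_sq_cone_witness[OF uv] .
    have "Box a \<in> \<Inter>u" using \<open>Box a \<in> G\<close> \<open>Box a \<in> S\<close> G' Inter_cone by blast
    then have "Box a \<in> D" using filt_sq_modal(1)[OF uv] D Inter_cone by blast
    then have "a \<in> D"
      using prime_theory_GS4_mp[OF D(1) GS4_derivable.cs4[OF cs4_axiom.ax_T]] by blast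
    then show "filt_sat S v a" using IH D by blast
  qed
qed

lemma filt_sat_Dia:
  assumes G: "prime_theory G" and "Dia a \<in> S"
    and IH: "\<And>H. prime_theory H \<Longrightarrow> filt_sat S (cone S H) a \<longleftrightarrow> a \<in> H"
  shows "filt_sat S (cone S G) (Dia a) \<longleftrightarrow> Dia a \<in> G"
proof
  assume "filt_sat S (cone S G) (Dia a)"
  then obtain v where v: "(cone S G, v) \<in> filt_sq S" "filt_sat S v a"
    using filt_le_cone[OF G G] by auto
  obtain D where D: "prime_theory D" "v = cone S D"
    using filt_sq_cone_witness[OF v(1)] .
  have "Dia a \<in> D"
    using IH D v(2) prime_theory_GS4_mp[OF D(1) GS4_derivable.cs4[OF cs4_axiom.ax_TDia]] by blast
  then have "Dia a \<in> \<Inter>v" using \<open>Dia a \<in> S\<close> D Inter_cone by blast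
  then show "Dia a \<in> G" using filt_sq_modal(2)[OF v(1)] G Inter_cone by blast
next
  assume "Dia a \<in> G"
  show "filt_sat S (cone S G) (Dia a)"
    unfolding sat.simps
  proof (intro allI impI)
    fix u assume "(cone S G, u) \<in> filt_le S"
    then obtain G' where G': "prime_theory G'" "G \<subseteq> G'" "u = cone S G'"
      using filt_le_witness[OF G] by blast
    then obtain D where "prime_theory D" "canon_sq G' D" "a \<in> D"
      using canon_sq_Dia_witness \<open>Dia a \<in> G\<close> by blast
    then show "\<exists>v. (u, v) \<in> filt_sq S \<and> filt_sat S v a"
      using filt_sq_cone G' IH by blast
  qed
qed

lemma filt_truth: "subfms a \<subseteq> S \<Longrightarrow> prime_theory G \<Longrightarrow> filt_sat S (cone S G) a \<longleftrightarrow> a \<in> G"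
proof (induction a arbitrary: G)
  case (Var p)
  then show ?case using filt_sat_Var by simp
next
  case Bot
  then show ?case using prime_theory_Bot by simp
next
  case (And a b)
  then show ?case using prime_theory_And_iff by simp
next
  case (Or a b)
  then show ?case using prime_theory_Or_iff by simp
next
  case (Imp a b)
  then show ?case using filt_sat_Imp by simp
next
  case (Dia a)
  then show ?case using filt_sat_Dia by simp
next
  case (Box a)
  then show ?case using filt_sat_Box by simp
qed

section \<open>Transport along a surjection\<close>

definition pullback :: "('a \<Rightarrow> 'b) \<Rightarrow> 'a set \<Rightarrow> ('b \<times> 'b) set \<Rightarrow> ('a \<times> 'a) set" where
  "pullback h W' R = {(x, y). x \<in> W' \<and> y \<in> W' \<and> (h x, h y) \<in> R}"

lemma all_rel_image_iff:
  assumes "h ` A = B" "R \<subseteq> B \<times> B"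
  shows "(\<forall>z. (w, z) \<in> R \<longrightarrow> Q z) \<longleftrightarrow> (\<forall>u\<in>A. (w, h u) \<in> R \<longrightarrow> Q (h u))"
  using assms by blast

lemma ex_rel_image_iff:
  assumes "h ` A = B" "R \<subseteq> B \<times> B"
  shows "(\<exists>z. (w, z) \<in> R \<and> Q z) \<longleftrightarrow> (\<exists>u\<in>A. (w, h u) \<in> R \<and> Q (h u))"
  using assms by blast

lemma sat_pullback:
  assumes "h ` W' = W" "Le \<subseteq> W \<times> W" "Sq \<subseteq> W \<times> W" "x \<in> W'"
  shows "sat (W' \<inter> h -` Wb) (pullback h W' Le) (pullback h W' Sq) (\<lambda>p. W' \<inter> h -` V p) x a
    \<longleftrightarrow> sat Wb Le Sq V (h x) a"
  using assms(4)
  by (induction a arbitrary: x)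
    (auto simp: pullback_def all_rel_image_iff[OF assms(1,2)] all_rel_image_iff[OF assms(1,3)]
      ex_rel_image_iff[OF assms(1,3)] cong: conj_cong)

lemma preorder_on_pullback: "preorder_on W R \<Longrightarrow> h ` W' \<subseteq> W \<Longrightarrow> preorder_on W' (pullback h W' R)"
  unfolding preorder_on_def refl_on_def trans_def pullback_def by blast

lemma GS4_model_pullback:
  assumes M: "GS4_model W {} Le Sq V" and h: "h ` W' = W"
  shows "GS4_model W' {} (pullback h W' Le) (pullback h W' Sq) (\<lambda>p. W' \<inter> h -` V p)"
proof -
  have Le: "preorder_on W Le" and Sq: "preorder_on W Sq" and V: "\<And>p. up_closed Le (V p)"
    and ll: "locally_linear Le" and fc: "forward_confluent Le Sq"
    and bc: "backward_confluent Le Sq"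
    using M unfolding GS4_model_def biint_model_def biint_frame_def by blast+
  have W: "Le \<subseteq> W \<times> W" "Sq \<subseteq> W \<times> W" using Le Sq unfolding preorder_on_def by blast+
  have "preorder_on W' (pullback h W' Le)" "preorder_on W' (pullback h W' Sq)"
    using preorder_on_pullback[OF Le] preorder_on_pullback[OF Sq] h by blast+
  moreover have "up_closed (pullback h W' Le) (W' \<inter> h -` V p)" for p
    using V unfolding up_closed_def pullback_def by blast
  ultimately have "biint_model W' {} (pullback h W' Le) (pullback h W' Sq) (\<lambda>p. W' \<inter> h -` V p)"
    unfolding biint_model_def biint_frame_def up_closed_def by blast
  moreover have "locally_linear (pullback h W' Le)"
    using ll unfolding locally_linear_def pullback_def by blast
  moreover have "forward_confluent (pullback h W' Le) (pullback h W' Sq)"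
    unfolding forward_confluent_def
  proof (intro allI impI)
    fix x x' y assume xx': "(x, x') \<in> pullback h W' Le" and xy: "(x, y) \<in> pullback h W' Sq"
    then obtain z where "(h y, z) \<in> Le" "(h x', z) \<in> Sq"
      using fc unfolding forward_confluent_def pullback_def by blast
    moreover obtain z' where "z' \<in> W'" "z = h z'" using calculation(1) W(1) h by blast
    ultimately show "\<exists>y'. (y, y') \<in> pullback h W' Le \<and> (x', y') \<in> pullback h W' Sq"
      using xx' xy unfolding pullback_def by blast
  qed
  moreover have "backward_confluent (pullback h W' Le) (pullback h W' Sq)"
    unfolding backward_confluent_def
  proof (intro allI impI)
    fix x y y' assume xy: "(x, y) \<in> pullback h W' Sq" and yy': "(y, y') \<in> pullback h W' Le"
    then obtain z where "(h x, z) \<in> Le" "(z, h y') \<in> Sq"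
      using bc unfolding backward_confluent_def pullback_def by blast
    moreover obtain z' where "z' \<in> W'" "z = h z'" using calculation(1) W(1) h by blast
    ultimately show "\<exists>x'. (x, x') \<in> pullback h W' Le \<and> (x', y') \<in> pullback h W' Sq"
      using xy yy' unfolding pullback_def by blast
  qed
  ultimately show ?thesis unfolding GS4_model_def by blast
qed

lemma valid_in_pullback:
  assumes M: "GS4_model W {} Le Sq V" and h: "h ` W' = W"
  shows "valid_in W' {} (pullback h W' Le) (pullback h W' Sq) (\<lambda>p. W' \<inter> h -` V p) \<phi>
    \<longleftrightarrow> valid_in W {} Le Sq V \<phi>"
proof -
  have "Le \<subseteq> W \<times> W" "Sq \<subseteq> W \<times> W"
    using M unfolding GS4_model_def biint_model_def biint_frame_def preorder_on_def by blast+
  then show ?thesis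
    using sat_pullback[OF h, of Le Sq _ "{}" V \<phi>] h unfolding valid_in_def by auto
qed

theorem mainTheorem2:
  fixes \<phi> :: fm
  assumes "\<not> GS4_derivable \<phi>"
  shows "\<exists>(W :: nat set) Wb Le Sq V. finite W \<and> GS4_model W Wb Le Sq V
            \<and> \<not> valid_in W Wb Le Sq V \<phi>"
proof -
  let ?S = "subfms \<phi>"
  obtain G where G: "prime_theory G" "\<phi> \<notin> G"
    using lindenbaum_single[of "{}" \<phi>] assms GS4_derivable_if_derives_empty by blast
  then have "\<not> filt_sat ?S (cone ?S G) \<phi>" using filt_truth by blast
  then have "\<not> valid_in (filt_worlds ?S) {} (filt_le ?S) (filt_sq ?S) (filt_val ?S) \<phi>"
    using cone_mem_filt_worlds[OF G(1)] unfolding valid_in_def by blast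
  moreover obtain n h where h: "h ` {i :: nat. i < n} = filt_worlds ?S"
    using finite_imp_nat_seg_image_inj_on[OF finite_filt_worlds[OF finite_subfms]] by metis
  ultimately have "\<not> valid_in {i. i < n} {} (pullback h {i. i < n} (filt_le ?S))
      (pullback h {i. i < n} (filt_sq ?S)) (\<lambda>p. {i. i < n} \<inter> h -` filt_val ?S p) \<phi>"
    using valid_in_pullback[OF GS4_model_filt] by blast
  then show ?thesis
    using GS4_model_pullback[OF GS4_model_filt h] finite_Collect_less_nat by blast
qed

end
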